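(* Let $\mathcal{X}$ be a connected $n$-premaniplex with base flag $x_0$ and $N=\operatorname{Stab}_{\mathcal{C}^n}(x_0)$, and let $(\mathcal{Y},\eta)$ be an $(n,m)$-voltage operator that preserves connectivity, with base flag $y_0$ of $\mathcal{Y}$, $L=\operatorname{Stab}_{\mathcal{C}^m}(y_0)$ and $\zeta:L\to\mathcal{C}^n$, $\zeta(\omega)=\eta(W_\omega(y_0))$. For $\upsilon\in\mathcal{C}^m$ let $\mathcal{Z}_\upsilon=\mathcal{C}^n/\zeta(L\cap L^\upsilon)$. If for every $\upsilon\in\mathcal{C}^m\setminus\operatorname{N}_{\mathcal{C}^m}(L)$ the premaniplex $\mathcal{X}$ does not cover $\mathcal{Z}_\upsilon$, then every automorphism of $\mathcal{X}\rtimes_\eta\mathcal{Y}$ is a lift of an automorphism of $\mathcal{Y}$.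
   Context: An $n$-premaniplex is an edge-coloured graph (semi-edges and parallel edges allowed) with colours $\{0,\dots,n-1\}$ such that every vertex (flag) is the start of exactly one dart of each colour, and for $|i-j|\ge2$ alternating $i,j$-paths of length 4 are closed; $x^i$ is the $i$-adjacent flag of $x$. $\mathcal{C}^n=\langle r_0,\dots,r_{n-1}\mid r_i^2,\ (r_ir_j)^2\ (|i-j|\ge2)\rangle$ acts on the left on flags by $r_ix=x^i$; automorphisms act on the right. A covering is a surjective map of flags preserving all adjacencies. $L^\upsilon=\upsilon^{-1}L\upsilon$ and $\operatorname{N}_{\mathcal{C}^m}(L)$ is the normaliser. For a subgroup $K\le\mathcal{C}^n$, $\mathcal{C}^n/K$ has flags the left cosets $\omega K$ with $(\omega K)^i=r_i\omega K$. For a flag $y$ of an $m$-premaniplex $\mathcal{Y}$ and $\omega\in\mathcal{C}^m$, $W_\omega(y)$ is the homotopy class of paths from $y$ whose colour sequence $i_1,\dots,i_k$ satisfies $r_{i_k}\cdots r_{i_1}=\omega$; these form the fundamental groupoid $\Pi(\mathcal{Y})$. A voltage assignment $\eta:\Pi(\mathcal{Y})\to\mathcal{C}^n$ satisfies $\eta(W_1W_2)=\eta(W_2)\eta(W_1)$; $(\mathcal{Y},\eta)$ is an $(n,m)$-voltage operator. $\mathcal{X}\rtimes_\eta\mathcal{Y}$ has flags $\mathcal{X}\times\mathcal{Y}$ and $(x,y)^i=(\eta(W_{r_i}(y))x,r_iy)$, $i\in\{0,\dots,m-1\}$. The operator preserves connectivity if $\mathcal{X}\rtimes_\eta\mathcal{Y}$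 is connected whenever $\mathcal{X}$ is. $\gamma\in\operatorname{Aut}(\mathcal{X}\rtimes_\eta\mathcal{Y})$ is a lift of $\tau\in\operatorname{Aut}(\mathcal{Y})$ if the $\mathcal{Y}$-coordinate of $(x,y)\gamma$ is $y\tau$ for all $(x,y)$. Standing convention: $\mathcal{Y}$ has a spanning tree all of whose darts have trivial voltage. *)

theory Defs
  imports Main
begin

text \<open>An element of C^n is represented by a word, i.e. a list [a1,...,ak] of colours
  a_j < n, standing for the product r_a1 r_a2 ... r_ak (leftmost factor first).\<close>

definition words :: "nat \<Rightarrow> nat list set" where
  "words n = {w. set w \<subseteq> {..<n}}"

inductive cox_eq :: "nat \<Rightarrow> nat list \<Rightarrow> nat list \<Rightarrow> bool" for n where
  refl:   "w \<in> words n \<Longrightarrow> cox_eq n w w"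
| sym:    "cox_eq n u v \<Longrightarrow> cox_eq n v u"
| trans:  "cox_eq n u v \<Longrightarrow> cox_eq n v w \<Longrightarrow> cox_eq n u w"
| cancel: "u \<in> words n \<Longrightarrow> v \<in> words n \<Longrightarrow> i < n \<Longrightarrow>
             cox_eq n (u @ [i, i] @ v) (u @ v)"
| comm:   "u \<in> words n \<Longrightarrow> v \<in> words n \<Longrightarrow> i < n \<Longrightarrow> j < n \<Longrightarrow>
             (i + 2 \<le> j \<or> j + 2 \<le> i) \<Longrightarrow>
             cox_eq n (u @ [i, j] @ v) (u @ [j, i] @ v)"

text \<open>Inverse of a word: since each generator is an involution, it is the reversed word.\<close>
definition word_inv :: "nat list \<Rightarrow> nat list" where
  "word_inv w = rev w"

text \<open>An n-premaniplex is given by a set of flags F and, for each colour i < n,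
  the i-adjacency map adj i (x \<mapsto> x^i), an involution of F (a fixed point is a
  semi-edge).\<close>

definition premaniplex :: "nat \<Rightarrow> 'a set \<Rightarrow> (nat \<Rightarrow> 'a \<Rightarrow> 'a) \<Rightarrow> bool" where
  "premaniplex n F adj \<longleftrightarrow>
     (\<forall>i<n. \<forall>x\<in>F. adj i x \<in> F \<and> adj i (adj i x) = x) \<and>
     (\<forall>i<n. \<forall>j<n. (i + 2 \<le> j \<or> j + 2 \<le> i) \<longrightarrow>
        (\<forall>x\<in>F. adj i (adj j (adj i (adj j x))) = x))"

fun act :: "(nat \<Rightarrow> 'a \<Rightarrow> 'a) \<Rightarrow> nat list \<Rightarrow> 'a \<Rightarrow> 'a" where
  "act adj [] x = x"
| "act adj (i # w) x = adj i (act adj w x)"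

definition connected_pm :: "nat \<Rightarrow> 'a set \<Rightarrow> (nat \<Rightarrow> 'a \<Rightarrow> 'a) \<Rightarrow> bool" where
  "connected_pm n F adj \<longleftrightarrow> (\<forall>x\<in>F. \<forall>x'\<in>F. \<exists>w\<in>words n. act adj w x = x')"

definition is_aut :: "nat \<Rightarrow> 'a set \<Rightarrow> (nat \<Rightarrow> 'a \<Rightarrow> 'a) \<Rightarrow> ('a \<Rightarrow> 'a) \<Rightarrow> bool" where
  "is_aut n F adj \<phi> \<longleftrightarrow> bij_betw \<phi> F F \<and> (\<forall>i<n. \<forall>x\<in>F. \<phi> (adj i x) = adj i (\<phi> x))"

definition is_covering :: "nat \<Rightarrow> 'a set \<Rightarrow> (nat \<Rightarrow> 'a \<Rightarrow> 'a) \<Rightarrow>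
                            'b set \<Rightarrow> (nat \<Rightarrow> 'b \<Rightarrow> 'b) \<Rightarrow> ('a \<Rightarrow> 'b) \<Rightarrow> bool" where
  "is_covering n F adj F' adj' f \<longleftrightarrow>
     f ` F = F' \<and> (\<forall>i<n. \<forall>x\<in>F. f (adj i x) = adj' i (f x))"

definition covers :: "nat \<Rightarrow> 'a set \<Rightarrow> (nat \<Rightarrow> 'a \<Rightarrow> 'a) \<Rightarrow>
                       'b set \<Rightarrow> (nat \<Rightarrow> 'b \<Rightarrow> 'b) \<Rightarrow> bool" where
  "covers n F adj F' adj' \<longleftrightarrow> (\<exists>f. is_covering n F adj F' adj' f)"

text \<open>For a set K of words (representing a subgroup of C^n), the flag of C^n/K
  given by the left coset \<omega>K is represented by the set of all words equal in C^n
  to \<omega>k for some k \<in> K.  (\<omega>K)^i = r_i \<omega> K.\<close>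

definition coset :: "nat \<Rightarrow> nat list set \<Rightarrow> nat list \<Rightarrow> nat list set" where
  "coset n K \<omega> = {\<omega>' \<in> words n. \<exists>k\<in>K. cox_eq n \<omega>' (\<omega> @ k)}"

definition coset_flags :: "nat \<Rightarrow> nat list set \<Rightarrow> nat list set set" where
  "coset_flags n K = {coset n K \<omega> | \<omega>. \<omega> \<in> words n}"

definition coset_adj :: "nat \<Rightarrow> nat \<Rightarrow> nat list set \<Rightarrow> nat list set" where
  "coset_adj n i C = {w' \<in> words n. \<exists>w\<in>C. cox_eq n w' (i # w)}"

text \<open>The fundamental groupoid of an m-premaniplex Y: the homotopy class W_\<omega>(y)
  is determined by its start flag y and \<omega> \<in> C^m; it ends at \<omega> y.  A voltage
  assignment is thus a map \<eta> y \<omega> = \<eta>(W_\<omega>(y)) \<in> C^n, well defined on C^m, with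
  \<eta>(W1 W2) = \<eta>(W2) \<eta>(W1); note W_\<omega>1(y) W_\<omega>2(\<omega>1 y) = W_(\<omega>2 \<omega>1)(y).\<close>

definition voltage_assignment ::
  "nat \<Rightarrow> nat \<Rightarrow> 'b set \<Rightarrow> (nat \<Rightarrow> 'b \<Rightarrow> 'b) \<Rightarrow> ('b \<Rightarrow> nat list \<Rightarrow> nat list) \<Rightarrow> bool" where
  "voltage_assignment n m FY adjY \<eta> \<longleftrightarrow>
     (\<forall>y\<in>FY. \<forall>w\<in>words m. \<eta> y w \<in> words n) \<and>
     (\<forall>y\<in>FY. \<forall>w\<in>words m. \<forall>w'\<in>words m. cox_eq m w w' \<longrightarrow> cox_eq n (\<eta> y w) (\<eta> y w')) \<and>
     (\<forall>y\<in>FY. \<forall>w1\<in>words m. \<forall>w2\<in>words m.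
        cox_eq n (\<eta> y (w2 @ w1)) (\<eta> (act adjY w1 y) w2 @ \<eta> y w1))"

text \<open>Spanning trees of Y, as sets of darts (y,i) (the dart of colour i from y to y^i):
  a reversal-closed dart set connecting all flags, minimal with that property.\<close>

definition darts :: "nat \<Rightarrow> 'b set \<Rightarrow> ('b \<times> nat) set" where
  "darts m FY = FY \<times> {..<m}"

definition dart_connects :: "(nat \<Rightarrow> 'b \<Rightarrow> 'b) \<Rightarrow> ('b \<times> nat) set \<Rightarrow> 'b set \<Rightarrow> bool" where
  "dart_connects adjY T FY \<longleftrightarrow>
     (\<forall>y\<in>FY. \<forall>y'\<in>FY. (\<lambda>a b. \<exists>i. (a, i) \<in> T \<and> b = adjY i a)\<^sup>*\<^sup>* y y')"

definition rev_closed :: "(nat \<Rightarrow> 'b \<Rightarrow> 'b) \<Rightarrow> ('b \<times> nat) set \<Rightarrow> bool" where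
  "rev_closed adjY T \<longleftrightarrow> (\<forall>(y, i)\<in>T. (adjY i y, i) \<in> T)"

definition spanning_tree :: "nat \<Rightarrow> 'b set \<Rightarrow> (nat \<Rightarrow> 'b \<Rightarrow> 'b) \<Rightarrow> ('b \<times> nat) set \<Rightarrow> bool" where
  "spanning_tree m FY adjY T \<longleftrightarrow>
     T \<subseteq> darts m FY \<and> rev_closed adjY T \<and> dart_connects adjY T FY \<and>
     (\<forall>T' \<subset> T. \<not> (rev_closed adjY T' \<and> dart_connects adjY T' FY))"

text \<open>(n,m)-voltage operator, including the standing convention that Y has a spanning
  tree all of whose darts have trivial voltage.\<close>

definition voltage_operator ::
  "nat \<Rightarrow> nat \<Rightarrow> 'b set \<Rightarrow> (nat \<Rightarrow> 'b \<Rightarrow> 'b) \<Rightarrow> ('b \<Rightarrow> nat list \<Rightarrow> nat list) \<Rightarrow> bool" where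
  "voltage_operator n m FY adjY \<eta> \<longleftrightarrow>
     premaniplex m FY adjY \<and> voltage_assignment n m FY adjY \<eta> \<and>
     (\<exists>T. spanning_tree m FY adjY T \<and> (\<forall>(y, i)\<in>T. cox_eq n (\<eta> y [i]) []))"

definition mix_flags :: "'a set \<Rightarrow> 'b set \<Rightarrow> ('a \<times> 'b) set" where
  "mix_flags FX FY = FX \<times> FY"

definition mix_adj :: "(nat \<Rightarrow> 'a \<Rightarrow> 'a) \<Rightarrow> (nat \<Rightarrow> 'b \<Rightarrow> 'b) \<Rightarrow> ('b \<Rightarrow> nat list \<Rightarrow> nat list) \<Rightarrow>
                       nat \<Rightarrow> 'a \<times> 'b \<Rightarrow> 'a \<times> 'b" where
  "mix_adj adjX adjY \<eta> i xy = (act adjX (\<eta> (snd xy) [i]) (fst xy), adjY i (snd xy))"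

text \<open>Every connected n-premaniplex is isomorphic to C^n/Stab(x0), which is
  countable, so it suffices (and is equivalent) to quantify over premaniplexes whose
  flags are natural numbers.\<close>

definition preserves_connectivity ::
  "nat \<Rightarrow> nat \<Rightarrow> 'b set \<Rightarrow> (nat \<Rightarrow> 'b \<Rightarrow> 'b) \<Rightarrow> ('b \<Rightarrow> nat list \<Rightarrow> nat list) \<Rightarrow> bool" where
  "preserves_connectivity n m FY adjY \<eta> \<longleftrightarrow>
     (\<forall>(FX :: nat set) adjX. premaniplex n FX adjX \<and> connected_pm n FX adjX \<longrightarrow>
        connected_pm m (mix_flags FX FY) (mix_adj adjX adjY \<eta>))"

definition is_lift :: "'a set \<Rightarrow> 'b set \<Rightarrow> ('a \<times> 'b \<Rightarrow> 'a \<times> 'b) \<Rightarrow> ('b \<Rightarrow> 'b) \<Rightarrow> bool" where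
  "is_lift FX FY \<gamma> \<tau> \<longleftrightarrow> (\<forall>x\<in>FX. \<forall>y\<in>FY. snd (\<gamma> (x, y)) = \<tau> y)"

definition stab :: "nat \<Rightarrow> (nat \<Rightarrow> 'b \<Rightarrow> 'b) \<Rightarrow> 'b \<Rightarrow> nat list set" where
  "stab m adj y0 = {w \<in> words m. act adj w y0 = y0}"

definition conj_set :: "nat \<Rightarrow> nat list set \<Rightarrow> nat list \<Rightarrow> nat list set" where
  "conj_set m L \<upsilon> = {w \<in> words m. \<upsilon> @ w @ word_inv \<upsilon> \<in> L}"

definition in_normaliser :: "nat \<Rightarrow> nat list set \<Rightarrow> nat list \<Rightarrow> bool" where
  "in_normaliser m L \<upsilon> \<longleftrightarrow> conj_set m L \<upsilon> = L"

end

theory Submission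
  imports Defs "HOL-Library.Countable"
begin

text \<open>
  Both \<open>X\<close> and \<open>X \<rtimes>\<^sub>\<eta> Y\<close> are connected, so an automorphism \<open>\<gamma>\<close> of the product
  is determined by \<open>\<gamma>(x\<^sub>0, y\<^sub>0) = \<psi>(x\<^sub>0, y\<^sub>0)\<close>, and the \<open>Y\<close>-coordinate of
  \<open>\<gamma>(\<omega>(x\<^sub>0, y\<^sub>0))\<close> is \<open>\<omega> y\<^sub>1\<close> with \<open>y\<^sub>1 = \<psi> y\<^sub>0\<close>. This coordinate depends only
  on \<open>\<omega> y\<^sub>0\<close> once \<open>L = Stab(y\<^sub>0)\<close> fixes \<open>y\<^sub>1\<close>, in particular once \<open>\<upsilon> = \<psi>\<^sup>-\<^sup>1\<close>
  normalises \<open>L\<close>. Suppose it does not. A word \<open>\<omega> \<in> L\<close> with \<open>\<zeta>(\<omega>) \<in> Stab(x\<^sub>0)\<close> fixes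
  \<open>(x\<^sub>0, y\<^sub>0)\<close>, hence also \<open>\<gamma>(x\<^sub>0, y\<^sub>0)\<close>, hence \<open>y\<^sub>1\<close>. Since \<open>\<zeta> : L \<rightarrow> C\<^sup>n\<close> is
  onto (preservation of connectivity, tested on \<open>C\<^sup>n\<close> itself), \<open>Stab(x\<^sub>0)\<close> lies in
  \<open>\<zeta>(L \<inter> Stab(y\<^sub>1)) = \<zeta>(L \<inter> L\<^sup>\<upsilon>)\<close>, so \<open>X\<close> covers \<open>Z\<^sub>\<upsilon>\<close>, which is excluded.
\<close>

lemma words_Nil [simp]: "[] \<in> words n"
  by (simp add: words_def)

lemma words_Cons [simp]: "i # w \<in> words n \<longleftrightarrow> i < n \<and> w \<in> words n"
  by (auto simp: words_def)

lemma words_append [simp]: "u @ v \<in> words n \<longleftrightarrow> u \<in> words n \<and> v \<in> words n"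
  by (auto simp: words_def)

lemma words_rev [simp]: "rev w \<in> words n \<longleftrightarrow> w \<in> words n"
  by (auto simp: words_def)

lemmas [trans] = cox_eq.trans

lemma cox_eq_append_cong:
  assumes "cox_eq n u v" "p \<in> words n" "q \<in> words n"
  shows "cox_eq n (p @ u @ q) (p @ v @ q)"
  using assms
proof (induction rule: cox_eq.induct)
  case (refl w)
  then show ?case by (simp add: cox_eq.refl)
next
  case (sym u v)
  then show ?case by (blast intro: cox_eq.sym)
next
  case (trans u v w)
  then show ?case by (blast intro: cox_eq.trans)
next
  case (cancel u v i)
  have "cox_eq n ((p @ u) @ [i, i] @ (v @ q)) ((p @ u) @ (v @ q))"
    using cancel by (intro cox_eq.cancel) auto
  then show ?case by simp
next
  case (comm u v i j)
  have "cox_eq n ((p @ u) @ [i, j] @ (v @ q)) ((p @ u) @ [j, i] @ (v @ q))"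
    using comm by (intro cox_eq.comm) auto
  then show ?case by simp
qed

lemma cox_eq_Cons_cong: "cox_eq n u v \<Longrightarrow> i < n \<Longrightarrow> cox_eq n (i # u) (i # v)"
  using cox_eq_append_cong[of n u v "[i]" "[]"] by simp

lemma cox_eq_append_left: "cox_eq n u v \<Longrightarrow> p \<in> words n \<Longrightarrow> cox_eq n (p @ u) (p @ v)"
  using cox_eq_append_cong[of n u v p "[]"] by simp

lemma cox_eq_append_right: "cox_eq n u v \<Longrightarrow> q \<in> words n \<Longrightarrow> cox_eq n (u @ q) (v @ q)"
  using cox_eq_append_cong[of n u v "[]" q] by simp

lemma cox_eq_rev_cancel: "g \<in> words n \<Longrightarrow> u \<in> words n \<Longrightarrow> cox_eq n (g @ rev g @ u) u"
proof (induction g arbitrary: u)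
  case Nil
  then show ?case by (simp add: cox_eq.refl)
next
  case (Cons i g)
  then have "cox_eq n (i # g @ rev g @ i # u) (i # i # u)"
    by (simp add: cox_eq_Cons_cong)
  also have "cox_eq n (i # i # u) u"
    using cox_eq.cancel[of "[]" n u i] Cons.prems by simp
  finally show ?case by simp
qed

lemma cox_eq_rev_cancel': "g \<in> words n \<Longrightarrow> u \<in> words n \<Longrightarrow> cox_eq n (rev g @ g @ u) u"
  using cox_eq_rev_cancel[of "rev g"] by simp

lemma act_append: "act adj (u @ v) x = act adj u (act adj v x)"
  by (induction u) auto

lemma act_in_if_adj_in:
  assumes "\<And>i x. i < n \<Longrightarrow> x \<in> F \<Longrightarrow> adj i x \<in> F" "w \<in> words n" "x \<in> F"
  shows "act adj w x \<in> F"
  using assms(2) by (induction w) (auto intro: assms(1,3))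

context
  fixes n F adj
  assumes pm: "premaniplex n F adj"
begin

lemma premaniplex_adj_in: "i < n \<Longrightarrow> x \<in> F \<Longrightarrow> adj i x \<in> F"
  using pm unfolding premaniplex_def by blast

lemma premaniplex_adj_adj: "i < n \<Longrightarrow> x \<in> F \<Longrightarrow> adj i (adj i x) = x"
  using pm unfolding premaniplex_def by blast

lemma premaniplex_adj_commute:
  assumes "i < n" "j < n" "i + 2 \<le> j \<or> j + 2 \<le> i" "x \<in> F"
  shows "adj i (adj j x) = adj j (adj i x)"
proof -
  have "adj i (adj j (adj i (adj j x))) = x"
    using pm assms unfolding premaniplex_def by blast
  then have "adj j (adj i (adj i (adj j (adj i (adj j x))))) = adj j (adj i x)"
    by simp
  then show ?thesis
    using assms by (simp add: premaniplex_adj_in premaniplex_adj_adj)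
qed

lemma premaniplex_act_in: "w \<in> words n \<Longrightarrow> x \<in> F \<Longrightarrow> act adj w x \<in> F"
  by (rule act_in_if_adj_in[OF premaniplex_adj_in])

lemma premaniplex_act_rev: "w \<in> words n \<Longrightarrow> x \<in> F \<Longrightarrow> act adj (rev w) (act adj w x) = x"
  by (induction w) (auto simp: act_append premaniplex_act_in premaniplex_adj_adj)

lemma premaniplex_act_act_rev: "w \<in> words n \<Longrightarrow> x \<in> F \<Longrightarrow> act adj w (act adj (rev w) x) = x"
  using premaniplex_act_rev[of "rev w"] by simp

lemma premaniplex_act_cox_eq: "cox_eq n u v \<Longrightarrow> x \<in> F \<Longrightarrow> act adj u x = act adj v x"
proof (induction rule: cox_eq.induct)
  case (cancel u v i)
  then show ?case
    by (simp add: act_append premaniplex_act_in premaniplex_adj_adj)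
next
  case (comm u v i j)
  then have "adj i (adj j (act adj v x)) = adj j (adj i (act adj v x))"
    by (intro premaniplex_adj_commute premaniplex_act_in)
  then show ?case
    by (simp add: act_append)
qed simp_all

end

lemma stab_append: "u \<in> stab m adj y \<Longrightarrow> v \<in> stab m adj y \<Longrightarrow> u @ v \<in> stab m adj y"
  by (simp add: stab_def act_append)

lemma conj_set_rev_stab:
  assumes pm: "premaniplex m F adj" and "\<psi> \<in> words m" "y \<in> F"
  shows "conj_set m (stab m adj y) (rev \<psi>) = stab m adj (act adj \<psi> y)"
proof -
  have "act adj (rev \<psi>) z = y \<longleftrightarrow> z = act adj \<psi> y" if "z \<in> F" for z
    using premaniplex_act_act_rev[OF pm \<open>\<psi> \<in> words m\<close> that]
      premaniplex_act_rev[OF pm \<open>\<psi> \<in> words m\<close> \<open>y \<in> F\<close>] by auto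
  then show ?thesis
    using assms premaniplex_act_in[OF pm]
    by (auto simp: conj_set_def stab_def word_inv_def act_append)
qed

section \<open>The universal premaniplex\<close>

text \<open>
  \<open>C\<^sup>n\<close> as a premaniplex with flags in \<open>nat\<close> (an element is coded by the least code
  of a word representing it), so that \<^const>\<open>preserves_connectivity\<close> applies to it.
\<close>

definition cox_code :: "nat \<Rightarrow> nat list \<Rightarrow> nat" where
  "cox_code n w = (LEAST k. cox_eq n w (from_nat k))"

definition universal_adj :: "nat \<Rightarrow> nat \<Rightarrow> nat \<Rightarrow> nat" where
  "universal_adj n i k = cox_code n (i # from_nat k)"

lemma cox_eq_from_nat_cox_code: "w \<in> words n \<Longrightarrow> cox_eq n w (from_nat (cox_code n w))"
  unfolding cox_code_def by (rule LeastI[of _ "to_nat w"]) (simp add: cox_eq.refl)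

lemma cox_code_cong: "cox_eq n w v \<Longrightarrow> cox_code n w = cox_code n v"
  unfolding cox_code_def by (metis cox_eq.sym cox_eq.trans)

lemma cox_code_eq_iff:
  assumes "w \<in> words n" "v \<in> words n"
  shows "cox_code n w = cox_code n v \<longleftrightarrow> cox_eq n w v"
proof
  assume "cox_code n w = cox_code n v"
  then show "cox_eq n w v"
    using cox_eq_from_nat_cox_code[OF assms(1)] cox_eq_from_nat_cox_code[OF assms(2)]
    by (metis cox_eq.sym cox_eq.trans)
qed (rule cox_code_cong)

lemma act_universal_adj:
  assumes "u \<in> words n" "v \<in> words n"
  shows "act (universal_adj n) u (cox_code n v) = cox_code n (u @ v)"
  using assms(1)
proof (induction u)
  case (Cons i u)
  have "cox_eq n (i # from_nat (cox_code n (u @ v))) (i # u @ v)"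
    using Cons.prems assms(2)
    by (intro cox_eq_Cons_cong cox_eq.sym[OF cox_eq_from_nat_cox_code]) auto
  then show ?case
    using Cons by (simp add: universal_adj_def cox_code_cong)
qed simp

lemma premaniplex_universal: "premaniplex n (cox_code n ` words n) (universal_adj n)"
proof -
  have involution: "cox_eq n (i # i # v) v" if "i < n" "v \<in> words n" for i v
    using cox_eq.cancel[of "[]" n v i] that by simp
  have commuting: "cox_eq n (i # j # i # j # v) v"
    if "i < n" "j < n" "i + 2 \<le> j \<or> j + 2 \<le> i" "v \<in> words n" for i j v
  proof -
    have "cox_eq n ([i] @ [j, i] @ j # v) ([i] @ [i, j] @ j # v)"
      using that by (intro cox_eq.comm) auto
    also have "cox_eq n ([i] @ [i, j] @ j # v) (j # j # v)"
      using involution[of i "j # j # v"] that by simp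
    also have "cox_eq n (j # j # v) v"
      using involution that by simp
    finally show ?thesis by simp
  qed
  show ?thesis
    unfolding premaniplex_def
    using act_universal_adj[of "[_]" n] act_universal_adj[of "[_, _]" n]
      act_universal_adj[of "[_, _, _, _]" n]
    by (auto simp: cox_code_cong involution commuting)
qed

lemma connected_universal: "connected_pm n (cox_code n ` words n) (universal_adj n)"
  unfolding connected_pm_def
proof (clarify)
  fix v v' assume v: "v \<in> words n" "v' \<in> words n"
  have "act (universal_adj n) (v' @ rev v) (cox_code n v) = cox_code n (v' @ rev v @ v)"
    using act_universal_adj v by simp
  also have "\<dots> = cox_code n v'"
    using v cox_eq_append_left[OF cox_eq_rev_cancel'[of v n "[]"]] by (simp add: cox_code_cong)
  finally show "\<exists>w\<in>words n. act (universal_adj n) w (cox_code n v) = cox_code n v'"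
    using v by (intro bexI[of _ "v' @ rev v"]) auto
qed

section \<open>Voltage products\<close>

context
  fixes n m FY adjY \<eta>
  assumes V: "voltage_assignment n m FY adjY \<eta>"
begin

lemma voltage_words: "y \<in> FY \<Longrightarrow> w \<in> words m \<Longrightarrow> \<eta> y w \<in> words n"
  using V unfolding voltage_assignment_def by blast

lemma voltage_append:
  "y \<in> FY \<Longrightarrow> w1 \<in> words m \<Longrightarrow> w2 \<in> words m \<Longrightarrow>
    cox_eq n (\<eta> y (w2 @ w1)) (\<eta> (act adjY w1 y) w2 @ \<eta> y w1)"
  using V unfolding voltage_assignment_def by blast

lemma voltage_Nil:
  assumes "y \<in> FY"
  shows "cox_eq n (\<eta> y []) []"
proof -
  define e where "e = \<eta> y []"
  have e: "e \<in> words n"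
    using voltage_words assms by (simp add: e_def)
  have idem: "cox_eq n (e @ e) e"
    using voltage_append[of y "[]" "[]"] assms by (simp add: e_def cox_eq.sym)
  have "cox_eq n e (rev e @ e @ e)"
    using cox_eq_rev_cancel'[OF e e] by (rule cox_eq.sym)
  also have "cox_eq n (rev e @ e @ e) (rev e @ e @ [])"
    using cox_eq_append_left[OF idem, of "rev e"] e by simp
  also have "cox_eq n (rev e @ e @ []) []"
    using cox_eq_rev_cancel'[OF e words_Nil] .
  finally show ?thesis by (simp add: e_def)
qed

lemma act_mix_adj:
  assumes X: "premaniplex n FX adjX" and "w \<in> words m" "x \<in> FX" "y \<in> FY"
  shows "act (mix_adj adjX adjY \<eta>) w (x, y) = (act adjX (\<eta> y w) x, act adjY w y)"
  using assms(2)
proof (induction w)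
  case Nil
  show ?case
    using premaniplex_act_cox_eq[OF X voltage_Nil] assms by simp
next
  case (Cons i w)
  have "cox_eq n (\<eta> y ([i] @ w)) (\<eta> (act adjY w y) [i] @ \<eta> y w)"
    using voltage_append[of y w "[i]"] Cons.prems assms by simp
  then have "act adjX (\<eta> y (i # w)) x = act adjX (\<eta> (act adjY w y) [i]) (act adjX (\<eta> y w) x)"
    using premaniplex_act_cox_eq[OF X _ assms(3)] by (simp add: act_append)
  then show ?case
    using Cons by (simp add: mix_adj_def)
qed

end

lemma snd_act_mix_adj: "snd (act (mix_adj adjX adjY \<eta>) w p) = act adjY w (snd p)"
  by (induction w) (auto simp: mix_adj_def)

lemma mix_adj_in:
  assumes "premaniplex n FX adjX" "voltage_operator n m FY adjY \<eta>"
    and "i < m" "p \<in> mix_flags FX FY"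
  shows "mix_adj adjX adjY \<eta> i p \<in> mix_flags FX FY"
proof -
  obtain x y where p: "p = (x, y)" "x \<in> FX" "y \<in> FY"
    using assms(4) by (auto simp: mix_flags_def)
  have Y: "premaniplex m FY adjY" and V: "voltage_assignment n m FY adjY \<eta>"
    using assms(2) by (auto simp: voltage_operator_def)
  have "\<eta> y [i] \<in> words n"
    using voltage_words[OF V p(3)] assms(3) by simp
  then show ?thesis
    using p assms(3) premaniplex_act_in[OF assms(1)] premaniplex_adj_in[OF Y]
    by (simp add: mix_adj_def mix_flags_def)
qed

context
  fixes m P adj \<gamma>
  assumes aut: "is_aut m P adj \<gamma>"
    and adj_in: "\<And>i p. i < m \<Longrightarrow> p \<in> P \<Longrightarrow> adj i p \<in> P"
begin

lemma is_aut_act: "w \<in> words m \<Longrightarrow> p \<in> P \<Longrightarrow> \<gamma> (act adj w p) = act adj w (\<gamma> p)"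
  by (induction w) (use aut act_in_if_adj_in[OF adj_in] in \<open>auto simp: is_aut_def\<close>)

lemma is_aut_inv_into: "is_aut m P adj (inv_into P \<gamma>)"
  unfolding is_aut_def
proof (intro conjI allI impI ballI)
  have bij: "bij_betw \<gamma> P P"
    using aut by (simp add: is_aut_def)
  then show "bij_betw (inv_into P \<gamma>) P P"
    by (rule bij_betw_inv_into)
  fix i p assume "i < m" "p \<in> P"
  moreover have "inv_into P \<gamma> p \<in> P" "\<gamma> (inv_into P \<gamma> p) = p"
    using bij \<open>p \<in> P\<close> by (auto simp: bij_betw_def inv_into_into f_inv_into_f)
  ultimately have "\<gamma> (adj i (inv_into P \<gamma> p)) = adj i p"
    using aut by (simp add: is_aut_def)
  then show "inv_into P \<gamma> (adj i p) = adj i (inv_into P \<gamma> p)"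
    using bij \<open>i < m\<close> \<open>inv_into P \<gamma> p \<in> P\<close>
    by (metis adj_in bij_betw_imp_inj_on inv_into_f_f)
qed

end

lemma preserves_connectivity_reach:
  assumes V: "voltage_assignment n m FY adjY \<eta>"
    and PC: "preserves_connectivity n m FY adjY \<eta>"
    and "y0 \<in> FY" "y \<in> FY" "g \<in> words n"
  shows "\<exists>\<omega>\<in>words m. act adjY \<omega> y0 = y \<and> cox_eq n (\<eta> y0 \<omega>) g"
proof -
  let ?U = "cox_code n ` words n" and ?adjU = "universal_adj n"
  have "connected_pm m (mix_flags ?U FY) (mix_adj ?adjU adjY \<eta>)"
    using PC premaniplex_universal connected_universal
    unfolding preserves_connectivity_def by blast
  moreover have "(cox_code n [], y0) \<in> mix_flags ?U FY" "(cox_code n g, y) \<in> mix_flags ?U FY"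
    using assms by (auto simp: mix_flags_def)
  ultimately obtain \<omega> where \<omega>: "\<omega> \<in> words m"
    "act (mix_adj ?adjU adjY \<eta>) \<omega> (cox_code n [], y0) = (cox_code n g, y)"
    unfolding connected_pm_def by blast
  moreover have "act (mix_adj ?adjU adjY \<eta>) \<omega> (cox_code n [], y0) =
      (cox_code n (\<eta> y0 \<omega>), act adjY \<omega> y0)"
    using act_mix_adj[OF V premaniplex_universal \<omega>(1) _ \<open>y0 \<in> FY\<close>]
      act_universal_adj[OF voltage_words[OF V \<open>y0 \<in> FY\<close> \<omega>(1)] words_Nil]
    by simp
  ultimately show ?thesis
    using cox_code_eq_iff voltage_words[OF V] assms by auto
qed

section \<open>Coset premaniplexes\<close>

lemma coset_adj_coset:
  assumes K: "K \<subseteq> words n" and "i < n" "g \<in> words n"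
  shows "coset_adj n i (coset n K g) = coset n K (i # g)"
proof
  show "coset n K (i # g) \<subseteq> coset_adj n i (coset n K g)"
  proof
    fix w assume "w \<in> coset n K (i # g)"
    then obtain k where k: "w \<in> words n" "k \<in> K" "cox_eq n w (i # g @ k)"
      by (auto simp: coset_def)
    moreover have "cox_eq n (g @ k) (g @ k)"
      by (intro cox_eq.refl) (use assms k(2) in auto)
    then have "g @ k \<in> coset n K g"
      using assms k(2) by (auto simp: coset_def)
    ultimately show "w \<in> coset_adj n i (coset n K g)"
      by (auto simp: coset_adj_def)
  qed
  show "coset_adj n i (coset n K g) \<subseteq> coset n K (i # g)"
  proof
    fix w' assume "w' \<in> coset_adj n i (coset n K g)"
    then obtain w k where "w' \<in> words n" "cox_eq n w' (i # w)" "k \<in> K" "cox_eq n w (g @ k)"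
      by (auto simp: coset_adj_def coset_def)
    then show "w' \<in> coset n K (i # g)"
      using \<open>i < n\<close> by (auto simp: coset_def intro: cox_eq.trans[OF _ cox_eq_Cons_cong])
  qed
qed

context
  fixes n K
  assumes K: "K \<subseteq> words n"
    and K_mult: "\<And>k1 k2. k1 \<in> K \<Longrightarrow> k2 \<in> K \<Longrightarrow> \<exists>k\<in>K. cox_eq n (k1 @ k2) k"
begin

lemma coset_subset_coset:
  assumes "g' \<in> words n" "k \<in> K" "cox_eq n g (g' @ k)"
  shows "coset n K g \<subseteq> coset n K g'"
proof
  fix w assume "w \<in> coset n K g"
  then obtain k1 where w: "w \<in> words n" "k1 \<in> K" "cox_eq n w (g @ k1)"
    by (auto simp: coset_def)
  obtain k2 where k2: "k2 \<in> K" "cox_eq n (k @ k1) k2"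
    using K_mult \<open>k \<in> K\<close> w(2) by blast
  have "cox_eq n w (g @ k1)"
    by (fact w(3))
  also have "cox_eq n (g @ k1) (g' @ k @ k1)"
    using cox_eq_append_right[OF assms(3)] K w(2) by auto
  also have "cox_eq n (g' @ k @ k1) (g' @ k2)"
    using cox_eq_append_left[OF k2(2) assms(1)] .
  finally show "w \<in> coset n K g'"
    using w k2 by (auto simp: coset_def)
qed

context
  fixes FX adjX x0
  assumes X: "premaniplex n FX adjX" "x0 \<in> FX"
    and stab_le: "\<And>h. h \<in> stab n adjX x0 \<Longrightarrow> \<exists>k\<in>K. cox_eq n h k"
begin

lemma coset_eq_if_act_eq:
  assumes "g \<in> words n" "g' \<in> words n" "act adjX g x0 = act adjX g' x0"
  shows "coset n K g = coset n K g'"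
proof -
  have subset: "coset n K g \<subseteq> coset n K g'"
    if "g \<in> words n" "g' \<in> words n" "act adjX g x0 = act adjX g' x0" for g g'
  proof -
    have "rev g' @ g \<in> stab n adjX x0"
      using that premaniplex_act_rev[OF X(1) that(2) X(2)] by (simp add: stab_def act_append)
    then obtain k where k: "k \<in> K" "cox_eq n (rev g' @ g) k"
      using stab_le by blast
    have "cox_eq n g (g' @ rev g' @ g)"
      using cox_eq.sym[OF cox_eq_rev_cancel[of g' n g]] that by simp
    also have "cox_eq n (g' @ rev g' @ g) (g' @ k)"
      using cox_eq_append_left[OF k(2) that(2)] .
    finally show ?thesis
      using coset_subset_coset[OF that(2) k(1)] by simp
  qed
  show ?thesis
    using subset[OF assms] subset[OF assms(2,1) assms(3)[symmetric]] by (rule subset_antisym)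
qed

lemma covers_coset_flags:
  assumes conn: "connected_pm n FX adjX"
  shows "covers n FX adjX (coset_flags n K) (coset_adj n)"
proof -
  have reach: "\<exists>g\<in>words n. act adjX g x0 = x" if "x \<in> FX" for x
    using conn X that unfolding connected_pm_def by blast
  define f where "f x = coset n K (SOME g. g \<in> words n \<and> act adjX g x0 = x)" for x
  have f_act: "f (act adjX g x0) = coset n K g" if "g \<in> words n" for g
  proof -
    let ?g = "SOME g'. g' \<in> words n \<and> act adjX g' x0 = act adjX g x0"
    have "?g \<in> words n \<and> act adjX ?g x0 = act adjX g x0"
      by (rule someI[of _ g]) (use that in simp)
    then show ?thesis
      unfolding f_def using coset_eq_if_act_eq that by blast
  qed
  have image: "f ` FX = coset_flags n K"
  proof
    show "f ` FX \<subseteq> coset_flags n K"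
    proof
      fix C assume "C \<in> f ` FX"
      then obtain g where "g \<in> words n" "C = f (act adjX g x0)"
        using reach by blast
      then show "C \<in> coset_flags n K"
        using f_act by (auto simp: coset_flags_def)
    qed
    show "coset_flags n K \<subseteq> f ` FX"
    proof
      fix C assume "C \<in> coset_flags n K"
      then obtain g where "g \<in> words n" "C = f (act adjX g x0)"
        using f_act by (auto simp: coset_flags_def)
      then show "C \<in> f ` FX"
        using premaniplex_act_in[OF X(1) _ X(2)] by blast
    qed
  qed
  have adj: "f (adjX i x) = coset_adj n i (f x)" if "i < n" "x \<in> FX" for i x
  proof -
    obtain g where "g \<in> words n" "act adjX g x0 = x"
      using reach \<open>x \<in> FX\<close> by blast
    then show ?thesis
      using f_act[of "i # g"] f_act[of g] coset_adj_coset[OF K] \<open>i < n\<close> by simp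
  qed
  have "is_covering n FX adjX (coset_flags n K) (coset_adj n) f"
    unfolding is_covering_def using image adj by blast
  then show ?thesis
    unfolding covers_def by blast
qed

end

end

section \<open>Automorphisms of a voltage product are lifts\<close>

lemma is_lift_snd: "is_lift FX FY \<gamma> \<tau> \<Longrightarrow> p \<in> mix_flags FX FY \<Longrightarrow> snd (\<gamma> p) = \<tau> (snd p)"
  by (auto simp: is_lift_def mix_flags_def)

locale voltage_product =
  fixes n m :: nat
    and FX :: "'a set" and adjX :: "nat \<Rightarrow> 'a \<Rightarrow> 'a" and x0 :: 'a
    and FY :: "'b set" and adjY :: "nat \<Rightarrow> 'b \<Rightarrow> 'b" and y0 :: 'b
    and \<eta> :: "'b \<Rightarrow> nat list \<Rightarrow> nat list"
  assumes X: "premaniplex n FX adjX" "connected_pm n FX adjX" "x0 \<in> FX"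
    and Y: "voltage_operator n m FY adjY \<eta>" "preserves_connectivity n m FY adjY \<eta>" "y0 \<in> FY"
begin

abbreviation flags :: "('a \<times> 'b) set" where
  "flags \<equiv> mix_flags FX FY"

abbreviation adj :: "nat \<Rightarrow> 'a \<times> 'b \<Rightarrow> 'a \<times> 'b" where
  "adj \<equiv> mix_adj adjX adjY \<eta>"

lemma premaniplex_Y: "premaniplex m FY adjY"
  and voltage: "voltage_assignment n m FY adjY \<eta>"
  using Y(1) by (auto simp: voltage_operator_def)

lemma base_flag_in: "(x0, y0) \<in> flags"
  using X(3) Y(3) by (simp add: mix_flags_def)

lemma adj_in: "i < m \<Longrightarrow> p \<in> flags \<Longrightarrow> adj i p \<in> flags"
  by (rule mix_adj_in[OF X(1) Y(1)])

lemma act_adj_base: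
  "w \<in> words m \<Longrightarrow> act adj w (x0, y0) = (act adjX (\<eta> y0 w) x0, act adjY w y0)"
  by (rule act_mix_adj[OF voltage X(1) _ X(3) Y(3)])

lemma flags_reachable:
  assumes "p \<in> flags"
  shows "\<exists>w\<in>words m. act adj w (x0, y0) = p"
proof -
  obtain x y where p: "p = (x, y)" "x \<in> FX" "y \<in> FY"
    using assms by (auto simp: mix_flags_def)
  obtain g where g: "g \<in> words n" "act adjX g x0 = x"
    using X p unfolding connected_pm_def by blast
  obtain \<omega> where \<omega>: "\<omega> \<in> words m" "act adjY \<omega> y0 = y" "cox_eq n (\<eta> y0 \<omega>) g"
    using preserves_connectivity_reach[OF voltage Y(2,3) p(3) g(1)] by blast
  have "act adj \<omega> (x0, y0) = p"
    using act_adj_base[OF \<omega>(1)] premaniplex_act_cox_eq[OF X(1) \<omega>(3) X(3)] \<omega>(2) g p by simp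
  then show ?thesis
    using \<omega>(1) by blast
qed

context
  fixes \<gamma>
  assumes aut: "is_aut m flags adj \<gamma>"
begin

lemma aut_in: "p \<in> flags \<Longrightarrow> \<gamma> p \<in> flags"
  using aut by (auto simp: is_aut_def bij_betw_def)

lemma snd_aut_act:
  "w \<in> words m \<Longrightarrow> p \<in> flags \<Longrightarrow> snd (\<gamma> (act adj w p)) = act adjY w (snd (\<gamma> p))"
  by (simp add: is_aut_act[OF aut adj_in] snd_act_mix_adj)

lemma stab_le_zeta_image:
  assumes "h \<in> stab n adjX x0"
  shows "\<exists>\<omega>\<in>stab m adjY y0 \<inter> stab m adjY (snd (\<gamma> (x0, y0))). cox_eq n h (\<eta> y0 \<omega>)"
proof -
  obtain \<omega> where \<omega>: "\<omega> \<in> words m" "act adjY \<omega> y0 = y0" "cox_eq n (\<eta> y0 \<omega>) h"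
    using preserves_connectivity_reach[OF voltage Y(2,3,3)] assms by (auto simp: stab_def)
  then have "act adj \<omega> (x0, y0) = (x0, y0)"
    using act_adj_base premaniplex_act_cox_eq[OF X(1) \<omega>(3) X(3)] assms by (simp add: stab_def)
  then have "act adjY \<omega> (snd (\<gamma> (x0, y0))) = snd (\<gamma> (x0, y0))"
    using snd_aut_act[OF \<omega>(1) base_flag_in] by simp
  then show ?thesis
    using \<omega> cox_eq.sym[OF \<omega>(3)] by (intro bexI[of _ \<omega>]) (auto simp: stab_def)
qed

lemma covers_zeta_coset:
  "covers n FX adjX
     (coset_flags n (\<eta> y0 ` (stab m adjY y0 \<inter> stab m adjY (snd (\<gamma> (x0, y0))))))
     (coset_adj n)"
proof (rule covers_coset_flags[OF _ _ X(1,3) _ X(2)])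
  let ?S = "stab m adjY y0 \<inter> stab m adjY (snd (\<gamma> (x0, y0)))"
  show "\<eta> y0 ` ?S \<subseteq> words n"
    using voltage_words[OF voltage Y(3)] unfolding stab_def by blast
  show "\<exists>k\<in>\<eta> y0 ` ?S. cox_eq n (k1 @ k2) k" if k: "k1 \<in> \<eta> y0 ` ?S" "k2 \<in> \<eta> y0 ` ?S" for k1 k2
  proof -
    obtain \<omega>1 where \<omega>1: "k1 = \<eta> y0 \<omega>1" "\<omega>1 \<in> ?S"
      using k(1) by (rule imageE)
    obtain \<omega>2 where \<omega>2: "k2 = \<eta> y0 \<omega>2" "\<omega>2 \<in> ?S"
      using k(2) by (rule imageE)
    have "cox_eq n (\<eta> y0 (\<omega>1 @ \<omega>2)) (k1 @ k2)"
      using \<omega>1 \<omega>2 voltage_append[OF voltage Y(3), of \<omega>2 \<omega>1] by (simp add: stab_def)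
    then have "cox_eq n (k1 @ k2) (\<eta> y0 (\<omega>1 @ \<omega>2))"
      by (rule cox_eq.sym)
    moreover have "\<omega>1 @ \<omega>2 \<in> ?S"
      using \<omega>1(2) \<omega>2(2) by (simp add: stab_append)
    ultimately show ?thesis
      by blast
  qed
  show "\<exists>k\<in>\<eta> y0 ` ?S. cox_eq n h k" if "h \<in> stab n adjX x0" for h
    using stab_le_zeta_image[OF that] by blast
qed

lemma lift_is_aut:
  assumes lift: "is_lift FX FY \<gamma> \<tau>" and lift_inv: "is_lift FX FY (inv_into flags \<gamma>) \<tau>'"
  shows "is_aut m FY adjY \<tau>"
proof -
  have bij: "bij_betw \<gamma> flags flags"
    using aut by (simp add: is_aut_def)
  have flag: "(x0, y) \<in> flags" if "y \<in> FY" for y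
    using X(3) that by (simp add: mix_flags_def)
  have \<tau>: "\<tau> y = snd (\<gamma> (x0, y))" if "y \<in> FY" for y
    using is_lift_snd[OF lift flag[OF that]] by simp
  have \<tau>': "\<tau>' y = snd (inv_into flags \<gamma> (x0, y))" if "y \<in> FY" for y
    using is_lift_snd[OF lift_inv flag[OF that]] by simp
  have inv_in: "inv_into flags \<gamma> p \<in> flags" if "p \<in> flags" for p
    using bij that by (simp add: bij_betw_def inv_into_into)
  have "bij_betw \<tau> FY FY"
  proof (rule bij_betw_byWitness[where f' = \<tau>'])
    show "\<forall>y\<in>FY. \<tau>' (\<tau> y) = y"
      using \<tau> is_lift_snd[OF lift_inv aut_in[OF flag]] bij flag
      by (simp add: bij_betw_def inv_into_f_f)
    show "\<forall>y\<in>FY. \<tau> (\<tau>' y) = y"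
      using \<tau>' is_lift_snd[OF lift inv_in[OF flag]] bij flag
      by (simp add: bij_betw_def f_inv_into_f)
    show "\<tau> ` FY \<subseteq> FY"
      using \<tau> aut_in[OF flag] by (force simp: mix_flags_def mem_Times_iff)
    show "\<tau>' ` FY \<subseteq> FY"
      using \<tau>' inv_in[OF flag] by (force simp: mix_flags_def mem_Times_iff)
  qed
  moreover have "\<tau> (adjY i y) = adjY i (\<tau> y)" if "i < m" "y \<in> FY" for i y
  proof -
    have "\<tau> (adjY i y) = snd (\<gamma> (adj i (x0, y)))"
      using is_lift_snd[OF lift adj_in[OF that(1) flag[OF that(2)]]] by (simp add: mix_adj_def)
    also have "\<dots> = snd (adj i (\<gamma> (x0, y)))"
      using aut that(1) flag[OF that(2)] unfolding is_aut_def by simp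
    also have "\<dots> = adjY i (\<tau> y)"
      using \<tau>[OF that(2)] by (simp add: mix_adj_def)
    finally show ?thesis .
  qed
  ultimately show ?thesis
    by (simp add: is_aut_def)
qed

end

end

locale voltage_product_no_cover = voltage_product +
  assumes no_cover: "\<And>\<upsilon>. \<upsilon> \<in> words m \<Longrightarrow> \<not> in_normaliser m (stab m adjY y0) \<upsilon> \<Longrightarrow>
    \<not> covers n FX adjX
      (coset_flags n (\<eta> y0 ` (stab m adjY y0 \<inter> conj_set m (stab m adjY y0) \<upsilon>)))
      (coset_adj n)"
begin

context
  fixes \<gamma>
  assumes aut: "is_aut m flags adj \<gamma>"
begin

lemma stab_snd_aut_base: "stab m adjY (snd (\<gamma> (x0, y0))) = stab m adjY y0"
proof -
  obtain \<psi> where \<psi>: "\<psi> \<in> words m" "act adj \<psi> (x0, y0) = \<gamma> (x0, y0)"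
    using flags_reachable[OF aut_in[OF aut base_flag_in]] by blast
  then have "snd (\<gamma> (x0, y0)) = act adjY \<psi> y0"
    by (metis snd_act_mix_adj snd_conv)
  then have conj: "conj_set m (stab m adjY y0) (rev \<psi>) = stab m adjY (snd (\<gamma> (x0, y0)))"
    using conj_set_rev_stab[OF premaniplex_Y \<psi>(1) Y(3)] by simp
  have "in_normaliser m (stab m adjY y0) (rev \<psi>)"
    using no_cover[of "rev \<psi>"] covers_zeta_coset[OF aut] conj \<psi>(1) by auto
  then show ?thesis
    using conj by (simp add: in_normaliser_def)
qed

lemma aut_is_lift: "is_lift FX FY \<gamma> (\<lambda>y. snd (\<gamma> (x0, y)))"
  unfolding is_lift_def
proof (intro ballI)
  fix x y assume "x \<in> FX" "y \<in> FY"
  define y1 where "y1 = snd (\<gamma> (x0, y0))"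
  have y1: "y1 \<in> FY"
    using aut_in[OF aut base_flag_in] by (auto simp: y1_def mix_flags_def)
  have reached: "snd (\<gamma> p) = act adjY w y1 \<and> act adjY w y0 = snd p"
    if "w \<in> words m" "act adj w (x0, y0) = p" for w p
    using snd_aut_act[OF aut that(1) base_flag_in] snd_act_mix_adj[of adjX adjY \<eta> w "(x0, y0)"]
      that by (simp add: y1_def)
  obtain \<alpha> \<beta> where \<alpha>: "\<alpha> \<in> words m" "act adj \<alpha> (x0, y0) = (x, y)"
    and \<beta>: "\<beta> \<in> words m" "act adj \<beta> (x0, y0) = (x0, y)"
    using flags_reachable \<open>x \<in> FX\<close> \<open>y \<in> FY\<close> X(3) by (metis mem_Sigma_iff mix_flags_def)
  have "rev \<beta> @ \<alpha> \<in> stab m adjY y0"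
    using reached[OF \<alpha>] reached[OF \<beta>] premaniplex_act_rev[OF premaniplex_Y \<beta>(1) Y(3)]
      \<alpha>(1) \<beta>(1) by (simp add: stab_def act_append)
  then have "rev \<beta> @ \<alpha> \<in> stab m adjY y1"
    by (simp add: stab_snd_aut_base y1_def)
  then have "act adjY (rev \<beta>) (act adjY \<alpha> y1) = y1"
    by (simp add: stab_def act_append)
  then have "act adjY \<alpha> y1 = act adjY \<beta> y1"
    using premaniplex_act_act_rev[OF premaniplex_Y \<beta>(1) premaniplex_act_in[OF premaniplex_Y \<alpha>(1) y1]]
    by simp
  then show "snd (\<gamma> (x, y)) = snd (\<gamma> (x0, y))"
    using reached[OF \<alpha>] reached[OF \<beta>] by simp
qed

end

end

theorem theorem6p9:
  fixes n m :: nat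
    and FX :: "'a set" and adjX :: "nat \<Rightarrow> 'a \<Rightarrow> 'a" and x0 :: 'a
    and FY :: "'b set" and adjY :: "nat \<Rightarrow> 'b \<Rightarrow> 'b" and y0 :: 'b
    and \<eta> :: "'b \<Rightarrow> nat list \<Rightarrow> nat list"
  assumes X: "premaniplex n FX adjX" "connected_pm n FX adjX" "x0 \<in> FX"
    and Y: "voltage_operator n m FY adjY \<eta>" "preserves_connectivity n m FY adjY \<eta>" "y0 \<in> FY"
    and nocover: "\<forall>\<upsilon>\<in>words m. \<not> in_normaliser m (stab m adjY y0) \<upsilon> \<longrightarrow>
        (let L = stab m adjY y0;
             \<zeta> = \<eta> y0;
             K = \<zeta> ` (L \<inter> conj_set m L \<upsilon>)
         in \<not> covers n FX adjX (coset_flags n K) (coset_adj n))"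
  shows "\<forall>\<gamma>. is_aut m (mix_flags FX FY) (mix_adj adjX adjY \<eta>) \<gamma> \<longrightarrow>
           (\<exists>\<tau>. is_aut m FY adjY \<tau> \<and> is_lift FX FY \<gamma> \<tau>)"
proof (intro allI impI)
  interpret voltage_product_no_cover n m FX adjX x0 FY adjY y0 \<eta>
    using X Y nocover by unfold_locales (auto simp: Let_def)
  fix \<gamma> assume aut: "is_aut m flags adj \<gamma>"
  have aut_inv: "is_aut m flags adj (inv_into flags \<gamma>)"
    by (rule is_aut_inv_into[OF aut adj_in])
  show "\<exists>\<tau>. is_aut m FY adjY \<tau> \<and> is_lift FX FY \<gamma> \<tau>"
    using lift_is_aut[OF aut aut_is_lift[OF aut] aut_is_lift[OF aut_inv]] aut_is_lift[OF aut]
    by blast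
qed

end
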